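(* Let $\mathcal{H}$ be a finite-dimensional Hilbert space, let $P$ be an orthogonal projection on $\mathcal{H}$ and $Q = 1 - P$. Let $\mathcal{L}(\rho) = -i[H,\rho] + \sum_{\ell}\mathcal{D}[F^{\ell}](\rho)$ be a Lindbladian with Hermitian $H$ and jump operators $F^\ell$, such that $\mathcal{L}$ admits a unique decoherence-free subspace with projection $P$ (i.e. the steady states/kernel of $\mathcal{L}$ are exactly the operators $\rho = P\rho P$), and such that $H = QHQ$ and $F^{\ell} = PF^{\ell}Q$ for all $\ell$. Perturb $H \to H + V$ with $V$ Hermitian and $F^\ell \to F^\ell + f^\ell$ with arbitrary operators $f^\ell$, and let $\mathcal{L}_{\mathrm{eff}} = \mathcal{P}_\infty \mathcal{O}\mathcal{P}_\infty - \mathcal{P}_\infty \mathcal{O}_1 \mathcal{L}^{-1}\mathcal{O}_1 \mathcal{P}_\infty$ be the effective (second-order) generator, with $\mathcal{O},\mathcal{O}_1,\mathcal{P}_\infty,\mathcal{L}^{-1}$ as in the context. Then for every operator $\rho$ with $\rho = P\rho P$, $$\mathcal{L}_{\mathrm{eff}}(\rho) = -i[H_{\mathrm{eff}},\rho] + \sum_\ell \mathcal{D}[F^\ell_{\mathrm{eff}}](\rho) + \mathcal{E}_{\mathrm{eff}}(\rho) - \tfrac12\{\mathcal{E}_{\mathrm{eff}}^{\ddagger}(I),\rho\},$$ where $$H_{\mathrm{eff}} = \tfrac12\left(V_{\mathrm{ul}} - K_{\mathrm{eff}}K^{-1}K_{\mathrm{eff}}\right) + \tfrac12\left(V_{\mathrm{ul}}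 - K_{\mathrm{eff}}K^{-1}K_{\mathrm{eff}}\right)^{\dagger},$$ $$F^\ell_{\mathrm{eff}} = f^\ell_{\mathrm{ul}} - F^\ell K^{-1}K_{\mathrm{eff}},$$ $$\mathcal{E}_{\mathrm{eff}}(\rho) = -\sum_{\ell,\ell'} F^{\ell'}\,\mathcal{K}^{-1}\!\left(f^\ell_{\mathrm{ll}}\,\rho\, f^{\ell\dagger}_{\mathrm{ll}}\right)F^{\ell'\dagger}.$$
   Context: $\mathcal{D}[F](\rho) = F\rho F^\dagger - \tfrac12\{F^\dagger F,\rho\}$. Block notation: for an operator $O$, $O_{\mathrm{ul}} = POP$, $O_{\mathrm{ur}} = POQ$, $O_{\mathrm{ll}} = QOP$, $O_{\mathrm{lr}} = QOQ$, and $O_{\mathrm{of}} = O_{\mathrm{ur}} + O_{\mathrm{ll}}$. The perturbation superoperator is $\mathcal{O} = \mathcal{L}' - \mathcal{L}$, where $\mathcal{L}'(\rho) = -i[H+V,\rho] + \sum_\ell \mathcal{D}[F^\ell + f^\ell](\rho)$; it splits as $\mathcal{O} = \mathcal{O}_1 + \mathcal{O}_2$, with $\mathcal{O}_1$ the part linear in $(V,f^\ell)$, namely $\mathcal{O}_1(\rho) = -i[V,\rho] + \sum_\ell\big(F^\ell\rho f^{\ell\dagger} + f^\ell\rho F^{\ell\dagger} - \tfrac12\{F^{\ell\dagger}f^\ell + f^{\ell\dagger}F^\ell,\rho\}\big)$, and $\mathcal{O}_2 = \sum_\ell \mathcal{D}[f^\ell]$. $\mathcal{L}^{-1}$ is the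 Drazin pseudoinverse of $\mathcal{L}$, and $\mathcal{P}_\infty = \mathcal{I} - \mathcal{L}\mathcal{L}^{-1}$ is the projection onto the steady states of $\mathcal{L}$ (equivalently $\mathcal{P}_\infty = \lim_{t\to\infty} e^{t\mathcal{L}}$). The Kamiltonians are $K = H - \tfrac{i}{2}\sum_\ell F^{\ell\dagger}F^\ell$ (which satisfies $K = QKQ$) and $K_{\mathrm{eff}} = V_{\mathrm{of}} - \tfrac{i}{2}\sum_\ell\big(F^{\ell\dagger}f^\ell_{\mathrm{ul}} + f^{\ell\dagger}_{\mathrm{ul}}F^\ell\big)$. $K^{-1}$ denotes the inverse of $K$ restricted to the range of $Q$ (extended by zero on the range of $P$). $\mathcal{K}$ is the superoperator $\mathcal{K}(X) = -i(KX - XK^\dagger)$, and $\mathcal{K}^{-1}$ is its inverse on operators $X = QXQ$. For a superoperator $\mathcal{E}(\cdot) = \sum_i A_i(\cdot)B_i^\dagger$, its adjoint is $\mathcal{E}^{\ddagger}(\cdot) = \sum_i A_i^\dagger(\cdot)B_i$. *)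

theory Defs
  imports "HOL-Analysis.Analysis"
begin

text \<open>Operators on a finite-dimensional Hilbert space C^n are complex n x n matrices,
  with the dimension given by a finite type 'n. Superoperators are functions on matrices.\<close>


definition adj :: "complex^('n::finite)^'n \<Rightarrow> complex^('n::finite)^'n" where
  "adj A = (\<chi> i j. cnj (A$j$i))"

definition scal :: "complex \<Rightarrow> complex^('n::finite)^'n \<Rightarrow> complex^('n::finite)^'n" where
  "scal c A = (\<chi> i j. c * A$i$j)"

definition comm :: "complex^('n::finite)^'n \<Rightarrow> complex^('n::finite)^'n \<Rightarrow> complex^('n::finite)^'n" where
  "comm A B = A ** B - B ** A"

definition acomm :: "complex^('n::finite)^'n \<Rightarrow> complex^('n::finite)^'n \<Rightarrow> complex^('n::finite)^'n" where
  "acomm A B = A ** B + B ** A"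

definition hermitian :: "complex^('n::finite)^'n \<Rightarrow> bool" where
  "hermitian A \<longleftrightarrow> adj A = A"

definition orth_proj :: "complex^('n::finite)^'n \<Rightarrow> bool" where
  "orth_proj P \<longleftrightarrow> P ** P = P \<and> adj P = P"

definition diss :: "complex^('n::finite)^'n \<Rightarrow> (complex^('n::finite)^'n \<Rightarrow> complex^'n^'n)" where
  "diss F \<rho> = F ** \<rho> ** adj F - scal (1/2) (acomm (adj F ** F) \<rho>)"

definition lindblad :: "complex^('n::finite)^'n \<Rightarrow> (nat \<Rightarrow> complex^('n::finite)^'n) \<Rightarrow> nat \<Rightarrow> (complex^('n::finite)^'n \<Rightarrow> complex^'n^'n)" where
  "lindblad H F m \<rho> = scal (-\<i>) (comm H \<rho>) + (\<Sum>l<m. diss (F l) \<rho>)"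

definition superop_linear :: "(complex^('n::finite)^'n \<Rightarrow> complex^'n^'n) \<Rightarrow> bool" where
  "superop_linear T \<longleftrightarrow> (\<forall>A B. T (A + B) = T A + T B) \<and> (\<forall>c A. T (scal c A) = scal c (T A))"

definition drazin :: "(complex^('n::finite)^'n \<Rightarrow> complex^'n^'n) \<Rightarrow> (complex^('n::finite)^'n \<Rightarrow> complex^'n^'n)" where
  "drazin L = (THE X. superop_linear X \<and> X \<circ> L \<circ> X = X \<and> L \<circ> X = X \<circ> L \<and>
                      (\<exists>k. (L ^^ Suc k) \<circ> X = L ^^ k))"

definition Pinf :: "(complex^('n::finite)^'n \<Rightarrow> complex^'n^'n) \<Rightarrow> (complex^('n::finite)^'n \<Rightarrow> complex^'n^'n)" where
  "Pinf L \<rho> = \<rho> - L (drazin L \<rho>)"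

text \<open>Adjoint of a superoperator w.r.t. the Hilbert-Schmidt inner product
  (for E = sum A_i (.) B_i^dag this is E^ddag = sum A_i^dag (.) B_i).\<close>
definition hs_adjoint :: "(complex^('n::finite)^'n \<Rightarrow> complex^'n^'n) \<Rightarrow> (complex^('n::finite)^'n \<Rightarrow> complex^'n^'n)" where
  "hs_adjoint E = (THE G. \<forall>A B. trace (adj A ** E B) = trace (adj (G A) ** B))"

definition O1 :: "complex^('n::finite)^'n \<Rightarrow> (nat \<Rightarrow> complex^('n::finite)^'n) \<Rightarrow> (nat \<Rightarrow> complex^('n::finite)^'n) \<Rightarrow> nat \<Rightarrow> (complex^('n::finite)^'n \<Rightarrow> complex^'n^'n)" where
  "O1 V F f m \<rho> = scal (-\<i>) (comm V \<rho>) +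
     (\<Sum>l<m. F l ** \<rho> ** adj (f l) + f l ** \<rho> ** adj (F l)
             - scal (1/2) (acomm (adj (F l) ** f l + adj (f l) ** F l) \<rho>))"

definition Leff :: "complex^('n::finite)^'n \<Rightarrow> (nat \<Rightarrow> complex^('n::finite)^'n) \<Rightarrow> complex^('n::finite)^'n \<Rightarrow> (nat \<Rightarrow> complex^('n::finite)^'n) \<Rightarrow> nat \<Rightarrow> (complex^('n::finite)^'n \<Rightarrow> complex^'n^'n)" where
  "Leff H F V f m \<rho> =
     (let L = lindblad H F m;
          Lp = lindblad (H + V) (\<lambda>l. F l + f l) m;
          Opert = (\<lambda>X. Lp X - L X)
      in Pinf L (Opert (Pinf L \<rho>)) - Pinf L (O1 V F f m (drazin L (O1 V F f m (Pinf L \<rho>)))))"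

definition Kam :: "complex^('n::finite)^'n \<Rightarrow> (nat \<Rightarrow> complex^('n::finite)^'n) \<Rightarrow> nat \<Rightarrow> complex^('n::finite)^'n" where
  "Kam H F m = H - scal (\<i>/2) (\<Sum>l<m. adj (F l) ** F l)"

definition Keff :: "complex^('n::finite)^'n \<Rightarrow> complex^('n::finite)^'n \<Rightarrow> (nat \<Rightarrow> complex^('n::finite)^'n) \<Rightarrow> (nat \<Rightarrow> complex^('n::finite)^'n) \<Rightarrow> nat \<Rightarrow> complex^('n::finite)^'n" where
  "Keff P V F f m =
     (let Q = mat 1 - P
      in P ** V ** Q + Q ** V ** P
         - scal (\<i>/2) (\<Sum>l<m. adj (F l) ** (P ** f l ** P) + adj (P ** f l ** P) ** F l))"

definition Kinv :: "complex^('n::finite)^'n \<Rightarrow> complex^('n::finite)^'n \<Rightarrow> complex^('n::finite)^'n" where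
  "Kinv Q K = (THE Y. Y = Q ** Y ** Q \<and> Y ** K = Q \<and> K ** Y = Q)"

definition Ksup :: "complex^('n::finite)^'n \<Rightarrow> (complex^('n::finite)^'n \<Rightarrow> complex^'n^'n)" where
  "Ksup K X = scal (-\<i>) (K ** X - X ** adj K)"

definition Ksupinv :: "complex^('n::finite)^'n \<Rightarrow> complex^('n::finite)^'n \<Rightarrow> (complex^('n::finite)^'n \<Rightarrow> complex^'n^'n)" where
  "Ksupinv Q K X = (THE Y. Y = Q ** Y ** Q \<and> Ksup K Y = X)"

end

theory Submission imports Defs begin

text \<open>Write the Lindbladian as \<open>L = Ksup K + J\<close> with \<open>J X = (\<Sum>l<m. F l ** X ** adj (F l))\<close>.
  Because \<open>F l = P ** F l ** Q\<close>, \<open>J\<close> maps everything into the \<open>P\<close>-block, which \<open>L\<close>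
  annihilates, while \<open>Ksup K\<close> is invertible away from the \<open>P\<close>-block by a dissipativity
  argument. This gives closed forms for the Drazin inverse of \<open>L\<close> and for
  \<open>Pinf L X = P ** X ** P - J (C (Q ** X ** Q))\<close>, where \<open>C\<close> inverts \<open>Ksup K\<close> on the
  \<open>Q\<close>-block. For \<open>\<rho>\<close> in the \<open>P\<close>-block the first-order perturbation of \<open>\<rho>\<close> is
  off-diagonal, with Drazin preimage \<open>R ** KE ** \<rho> + \<rho> ** adj KE ** adj R\<close> where \<open>R\<close> is the
  inverse of \<open>K\<close> on the range of \<open>Q\<close>; the effective generator is then an explicit block
  computation. The anticommutator term comes from duality: the adjoint of \<open>J\<close> sends the
  identity to \<open>\<Sum>l<m. adj (F l) ** F l = \<i> (K - adj K)\<close>.\<close>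

section \<open>Matrix algebra\<close>

type_synonym 'n cmat = "complex^'n^'n"

lemma matrix_add_rdistrib: "(A + B) ** C = A ** C + B ** (C::'n::finite cmat)"
  by (simp add: matrix_matrix_mult_def vec_eq_iff algebra_simps sum.distrib)
lemma matrix_diff_ldistrib: "A ** (B - C) = A ** B - A ** (C::'n::finite cmat)"
  by (simp add: matrix_matrix_mult_def vec_eq_iff algebra_simps sum_subtractf)
lemma matrix_diff_rdistrib: "(A - B) ** C = A ** C - B ** (C::'n::finite cmat)"
  by (simp add: matrix_matrix_mult_def vec_eq_iff algebra_simps sum_subtractf)
lemma matrix_mul_uminus_left: "(- A) ** C = - (A ** (C::'n::finite cmat))"
  by (simp add: matrix_matrix_mult_def vec_eq_iff sum_negf)
lemma matrix_mul_uminus_right: "A ** (- C) = - (A ** (C::'n::finite cmat))"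
  by (simp add: matrix_matrix_mult_def vec_eq_iff sum_negf)
lemma matrix_mul_lzero: "(0::'n::finite cmat) ** C = 0"
  by (simp add: matrix_matrix_mult_def vec_eq_iff)
lemma matrix_mul_rzero: "C ** (0::'n::finite cmat) = 0"
  by (simp add: matrix_matrix_mult_def vec_eq_iff)
lemma matrix_mul_sum_left: "(\<Sum>i\<in>I. f i) ** (C::'n::finite cmat) = (\<Sum>i\<in>I. f i ** C)"
  by (induction I rule: infinite_finite_induct) (auto simp: matrix_mul_lzero matrix_add_rdistrib)
lemma matrix_mul_sum_right: "(C::'n::finite cmat) ** (\<Sum>i\<in>I. f i) = (\<Sum>i\<in>I. C ** f i)"
  by (induction I rule: infinite_finite_induct) (auto simp: matrix_mul_rzero matrix_add_ldistrib)

lemma matrix_mul_scal_left: "scal c A ** B = scal c (A ** (B::'n::finite cmat))"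
  by (simp add: scal_def matrix_matrix_mult_def vec_eq_iff sum_distrib_left mult.assoc)
lemma matrix_mul_scal_right: "A ** scal c B = scal c (A ** (B::'n::finite cmat))"
  by (simp add: scal_def matrix_matrix_mult_def vec_eq_iff sum_distrib_left mult.left_commute)
lemma scal_scal: "scal a (scal b A) = scal (a * b) (A::'n::finite cmat)"
  by (simp add: scal_def vec_eq_iff mult.assoc)
lemma scal_add_right: "scal c (A + B) = scal c A + scal c (B::'n::finite cmat)"
  by (simp add: scal_def vec_eq_iff algebra_simps)
lemma scal_diff_right: "scal c (A - B) = scal c A - scal c (B::'n::finite cmat)"
  by (simp add: scal_def vec_eq_iff algebra_simps)
lemma scal_uminus_right: "scal c (- A) = - scal c (A::'n::finite cmat)"
  by (simp add: scal_def vec_eq_iff)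
lemma scal_uminus_left: "scal (- c) (A::'n::finite cmat) = - scal c A"
  by (simp add: scal_def vec_eq_iff)
lemma scal_zero_right: "scal c (0::'n::finite cmat) = 0"
  by (simp add: scal_def vec_eq_iff)
lemma scal_zero_left: "scal 0 (A::'n::finite cmat) = 0"
  by (simp add: scal_def vec_eq_iff)
lemma scal_one_left: "scal 1 (A::'n::finite cmat) = A"
  by (simp add: scal_def vec_eq_iff)
lemma scal_sum_right: "scal c (\<Sum>i\<in>I. f i) = (\<Sum>i\<in>I. scal c (f i::'n::finite cmat))"
  by (induction I rule: infinite_finite_induct) (auto simp: scal_zero_right scal_add_right)
lemma scal_eq_0_iff: "scal c (A::'n::finite cmat) = 0 \<longleftrightarrow> c = 0 \<or> A = 0"
  by (auto simp: scal_def vec_eq_iff)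
lemma scaleR_eq_scal: "r *\<^sub>R (A::'n::finite cmat) = scal (of_real r) A"
proof -
  have "r *\<^sub>R z = of_real r * z" for z :: complex by (simp add: scaleR_conv_of_real)
  then show ?thesis by (simp only: vec_eq_iff scal_def vector_scaleR_component vec_lambda_beta) simp
qed

lemma adj_matrix_mul: "adj (A ** B) = adj B ** adj (A::'n::finite cmat)"
  by (simp add: adj_def matrix_matrix_mult_def vec_eq_iff mult.commute)
lemma adj_add: "adj (A + B) = adj A + adj (B::'n::finite cmat)"
  by (simp add: adj_def vec_eq_iff)
lemma adj_diff: "adj (A - B) = adj A - adj (B::'n::finite cmat)"
  by (simp add: adj_def vec_eq_iff)
lemma adj_uminus: "adj (- A) = - adj (A::'n::finite cmat)"
  by (simp add: adj_def vec_eq_iff)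
lemma adj_zero: "adj (0::'n::finite cmat) = 0"
  by (simp add: adj_def vec_eq_iff)
lemma adj_adj: "adj (adj A) = (A::'n::finite cmat)"
  by (simp add: adj_def vec_eq_iff)
lemma adj_scal: "adj (scal c A) = scal (cnj c) (adj (A::'n::finite cmat))"
  by (simp add: adj_def scal_def vec_eq_iff)
lemma adj_mat_1: "adj (mat 1 :: 'n::finite cmat) = mat 1"
  by (simp add: adj_def mat_def vec_eq_iff)
lemma adj_sum: "adj (\<Sum>i\<in>I. f i) = (\<Sum>i\<in>I. adj (f i::'n::finite cmat))"
  by (induction I rule: infinite_finite_induct) (auto simp: adj_zero adj_add)

text \<open>Normal form used by the simplifier: products associated to the right, scalars and
  adjoints pushed outwards respectively inwards.\<close>
lemmas cmat_simps = matrix_mul_assoc[symmetric] matrix_add_ldistrib matrix_add_rdistrib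
  matrix_diff_ldistrib matrix_diff_rdistrib matrix_mul_uminus_left matrix_mul_uminus_right
  matrix_mul_lzero matrix_mul_rzero matrix_mul_sum_left matrix_mul_sum_right
  matrix_mul_scal_left matrix_mul_scal_right scal_scal scal_add_right scal_diff_right
  scal_uminus_right scal_uminus_left scal_zero_right scal_zero_left scal_one_left scal_sum_right
  adj_matrix_mul adj_add adj_diff adj_uminus adj_zero adj_adj adj_scal adj_mat_1 adj_sum

text \<open>A block relation \<open>A ** B = C\<close> must also fire inside right-associated products.\<close>
lemma rassoc: "A ** B = C \<Longrightarrow> A ** (B ** X) = C ** (X::'n::finite cmat)"
  by (metis matrix_mul_assoc)
lemma rassoc_zero: "A ** B = 0 \<Longrightarrow> A ** (B ** X) = (0::'n::finite cmat)"
  by (metis matrix_mul_assoc matrix_mul_lzero)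

lemma trace_uminus: "trace (- A) = - trace (A::'n::finite cmat)"
  by (simp add: trace_def sum_negf)
lemma trace_zero: "trace (0::'n::finite cmat) = 0"
  by (simp add: trace_def)
lemma trace_scal: "trace (scal c A) = c * trace (A::'n::finite cmat)"
  by (simp add: trace_def scal_def sum_distrib_left)
lemma trace_sum: "trace (\<Sum>i\<in>I. f i) = (\<Sum>i\<in>I. trace (f i::'n::finite cmat))"
  by (induction I rule: infinite_finite_induct) (auto simp: trace_zero trace_add)
lemma trace_adj: "trace (adj A) = cnj (trace (A::'n::finite cmat))"
  by (simp add: trace_def adj_def)

lemmas trace_simps = trace_add trace_sub trace_uminus trace_zero trace_scal trace_sum

lemmas sum_simps = sum.distrib sum_subtractf sum_negf

definition hs_norm_sq :: "'n::finite cmat \<Rightarrow> real" where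
  "hs_norm_sq A = (\<Sum>i\<in>UNIV. \<Sum>j\<in>UNIV. (cmod (A$i$j))\<^sup>2)"

lemma hs_norm_sq_nonneg: "hs_norm_sq A \<ge> 0"
  unfolding hs_norm_sq_def by (intro sum_nonneg) auto

lemma hs_norm_sq_eq_0D: "hs_norm_sq (A::'n::finite cmat) = 0 \<Longrightarrow> A = 0"
proof -
  assume "hs_norm_sq A = 0"
  then have "\<forall>i\<in>UNIV. (\<Sum>j\<in>UNIV. (cmod (A$i$j))\<^sup>2) = 0"
    unfolding hs_norm_sq_def by (subst sum_nonneg_eq_0_iff[symmetric]) (auto intro: sum_nonneg)
  then show "A = 0" by (simp add: sum_nonneg_eq_0_iff vec_eq_iff)
qed

lemma trace_adj_mult_self: "trace (adj A ** A) = of_real (hs_norm_sq (A::'n::finite cmat))"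
proof -
  have "trace (adj A ** A) = (\<Sum>i\<in>UNIV. \<Sum>j\<in>UNIV. cnj (A$j$i) * A$j$i)"
    by (simp add: trace_def adj_def matrix_matrix_mult_def)
  also have "\<dots> = (\<Sum>i\<in>UNIV. \<Sum>j\<in>UNIV. of_real ((cmod (A$j$i))\<^sup>2))"
    by (intro sum.cong refl) (metis complex_norm_square mult.commute of_real_power)
  also have "\<dots> = of_real (\<Sum>i\<in>UNIV. \<Sum>j\<in>UNIV. (cmod (A$j$i))\<^sup>2)"
    by simp
  also have "(\<Sum>i\<in>UNIV. \<Sum>j\<in>UNIV. (cmod (A$j$i))\<^sup>2) = hs_norm_sq A"
    unfolding hs_norm_sq_def by (rule sum.swap)
  finally show ?thesis .
qed

lemma trace_adj_mult_self_eq_0D: "trace (adj A ** A) = 0 \<Longrightarrow> (A::'n::finite cmat) = 0"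
  by (simp add: trace_adj_mult_self hs_norm_sq_eq_0D)

section \<open>Linear superoperators\<close>

lemma superop_linear_imp_linear: "superop_linear (f :: 'n::finite cmat \<Rightarrow> 'n cmat) \<Longrightarrow> linear f"
  unfolding superop_linear_def by (intro linearI) (simp_all add: scaleR_eq_scal)

lemma superop_linear_add: "superop_linear f \<Longrightarrow> f (A + B) = f A + f B"
  by (simp add: superop_linear_def)

lemma superop_linear_scal: "superop_linear f \<Longrightarrow> f (scal c A) = scal c (f A)"
  by (simp add: superop_linear_def)

lemma superop_linear_0: "superop_linear (f :: 'n::finite cmat \<Rightarrow> 'n cmat) \<Longrightarrow> f 0 = 0"
  by (metis superop_linear_imp_linear linear_0)

lemma superop_linear_diff:
  "superop_linear (f :: 'n::finite cmat \<Rightarrow> 'n cmat) \<Longrightarrow> f (A - B) = f A - f B"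
  by (metis superop_linear_imp_linear linear_diff)

lemma superop_linear_sum:
  "superop_linear (f :: 'n::finite cmat \<Rightarrow> 'n cmat) \<Longrightarrow> f (\<Sum>i\<in>I. A i) = (\<Sum>i\<in>I. f (A i))"
  by (metis superop_linear_imp_linear linear_sum)

lemma superop_linear_surj:
  fixes f :: "'n::finite cmat \<Rightarrow> 'n cmat"
  assumes "superop_linear f" and "\<And>X. f X = 0 \<Longrightarrow> X = 0"
  shows "surj f"
proof (rule linear_inj_imp_surj)
  show "linear f" using assms(1) by (rule superop_linear_imp_linear)
  then show "inj f" using assms(2) by (simp add: linear_injective_0)
qed

lemma ex1_block_preimage:
  fixes g :: "'n::finite cmat \<Rightarrow> 'n cmat"
  assumes Q: "Q ** Q = Q" and g: "superop_linear g"
    and g_block: "\<And>Z. Q ** (g Z ** Q) = g (Q ** (Z ** Q))"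
    and g_inj: "\<And>Y. Q ** (Y ** Q) = Y \<Longrightarrow> g Y = 0 \<Longrightarrow> Y = 0"
    and X: "Q ** (X ** Q) = X"
  shows "\<exists>!Y. Y = Q ** Y ** Q \<and> g Y = X"
proof -
  note Qs = Q Q[THEN rassoc]
  define h where "h Y = g (Q ** (Y ** Q)) + (Y - Q ** (Y ** Q))" for Y
  have h_lin: "superop_linear h"
    using g unfolding superop_linear_def h_def by (simp add: cmat_simps)
  have QhQ: "Q ** (h Y ** Q) = g (Q ** (Y ** Q))" for Y
    using g_block[of "Q ** (Y ** Q)"] by (simp add: h_def cmat_simps Qs)
  have "surj h"
  proof (rule superop_linear_surj[OF h_lin])
    fix Y assume hY: "h Y = 0"
    have "Q ** (Q ** (Y ** Q) ** Q) = Q ** (Y ** Q)" by (simp add: cmat_simps Qs)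
    moreover have "g (Q ** (Y ** Q)) = 0" using QhQ[of Y] hY by (simp add: cmat_simps)
    ultimately have "Q ** (Y ** Q) = 0" by (rule g_inj)
    with hY show "Y = 0" by (simp add: h_def superop_linear_0[OF g])
  qed
  then obtain Y where "h Y = X" by (metis surjD)
  then have gY: "g (Q ** (Y ** Q)) = X" using QhQ[of Y] X by simp
  show ?thesis
  proof (rule ex1I[of _ "Q ** (Y ** Q)"])
    show "Q ** (Y ** Q) = Q ** (Q ** (Y ** Q)) ** Q \<and> g (Q ** (Y ** Q)) = X"
      using gY by (simp add: cmat_simps Qs)
    fix Z assume "Z = Q ** Z ** Q \<and> g Z = X"
    then have QZQ: "Q ** (Z ** Q) = Z" and gZ: "g Z = X" by (metis matrix_mul_assoc)+
    have "Q ** ((Z - Q ** (Y ** Q)) ** Q) = Z - Q ** (Y ** Q)"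
      using QZQ by (simp add: cmat_simps Qs)
    moreover have "g (Z - Q ** (Y ** Q)) = 0" using gZ gY by (simp add: superop_linear_diff[OF g])
    ultimately have "Z - Q ** (Y ** Q) = 0" by (rule g_inj)
    then show "Z = Q ** (Y ** Q)" by simp
  qed
qed

lemma hs_adjoint_eqI:
  fixes E G :: "'n::finite cmat \<Rightarrow> 'n cmat"
  assumes "\<And>A B. trace (adj A ** E B) = trace (adj (G A) ** B)"
  shows "hs_adjoint E = G"
  unfolding hs_adjoint_def
proof (rule the_equality)
  show "\<forall>A B. trace (adj A ** E B) = trace (adj (G A) ** B)" using assms by blast
  fix G' assume G': "\<forall>A B. trace (adj A ** E B) = trace (adj (G' A) ** B)"
  show "G' = G"
  proof
    fix A
    define B where "B = G' A - G A"
    have "trace (adj B ** B) = trace (adj (G' A) ** B) - trace (adj (G A) ** B)"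
      by (simp add: B_def adj_diff matrix_diff_rdistrib trace_sub)
    also have "\<dots> = 0" using G' assms by simp
    finally show "G' A = G A" using trace_adj_mult_self_eq_0D unfolding B_def by fastforce
  qed
qed

section \<open>Uniqueness of the Drazin inverse\<close>

lemma funpow_comp_commute:
  fixes L Y :: "'a \<Rightarrow> 'a"
  assumes "L \<circ> Y = Y \<circ> L" shows "(L ^^ n) \<circ> Y = Y \<circ> (L ^^ n)"
proof (induction n)
  case 0 then show ?case by simp
next
  case (Suc n)
  have "(L ^^ Suc n) \<circ> Y = L \<circ> ((L ^^ n) \<circ> Y)" by (simp only: funpow.simps(2) o_assoc)
  also have "\<dots> = (L \<circ> Y) \<circ> (L ^^ n)" by (simp only: Suc.IH o_assoc)
  also have "\<dots> = Y \<circ> (L ^^ Suc n)" by (simp only: assms funpow.simps(2) o_assoc)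
  finally show ?case .
qed

lemma drazin_pow_left:
  fixes L Y :: "'a \<Rightarrow> 'a"
  assumes YLY: "Y \<circ> L \<circ> Y = Y" and comm: "L \<circ> Y = Y \<circ> L"
  shows "Y = (Y ^^ Suc n) \<circ> (L ^^ n)"
proof (induction n)
  case 0 then show ?case by simp
next
  case (Suc n)
  have "Y \<circ> Y \<circ> L = Y \<circ> (L \<circ> Y)" by (simp only: comm o_assoc)
  then have YYL: "Y \<circ> Y \<circ> L = Y" using YLY by (simp only: o_assoc)
  have e1: "Y ^^ Suc (Suc n) = Y ^^ n \<circ> Y \<circ> Y" by (simp only: funpow_Suc_right o_assoc)
  have e2: "L ^^ Suc n = L \<circ> L ^^ n" by simp
  have e3: "Y ^^ Suc n = Y ^^ n \<circ> Y" by (simp only: funpow_Suc_right)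
  have "(Y ^^ Suc (Suc n)) \<circ> (L ^^ Suc n) = (Y ^^ n) \<circ> (Y \<circ> Y \<circ> L) \<circ> (L ^^ n)"
    by (simp only: e1 e2 o_assoc)
  also have "\<dots> = (Y ^^ Suc n) \<circ> (L ^^ n)"
    by (simp only: YYL e3)
  finally have step: "(Y ^^ Suc (Suc n)) \<circ> (L ^^ Suc n) = (Y ^^ Suc n) \<circ> (L ^^ n)" .
  show ?case by (rule trans[OF Suc.IH step[symmetric]])
qed

lemma drazin_pow_right:
  fixes L Y :: "'a \<Rightarrow> 'a"
  assumes YLY: "Y \<circ> L \<circ> Y = Y" and comm: "L \<circ> Y = Y \<circ> L"
  shows "Y = (L ^^ n) \<circ> (Y ^^ Suc n)"
proof (induction n)
  case 0 then show ?case by simp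
next
  case (Suc n)
  have "L \<circ> Y \<circ> Y = Y \<circ> L \<circ> Y" by (simp only: comm o_assoc)
  then have LYY: "L \<circ> Y \<circ> Y = Y" using YLY by (simp only: o_assoc)
  have e1: "Y ^^ Suc (Suc n) = Y \<circ> Y \<circ> Y ^^ n" by (simp add: o_assoc)
  have e2: "L ^^ Suc n = L ^^ n \<circ> L" by (simp only: funpow_Suc_right)
  have e3: "Y ^^ Suc n = Y \<circ> Y ^^ n" by simp
  have "(L ^^ Suc n) \<circ> (Y ^^ Suc (Suc n)) = (L ^^ n) \<circ> (L \<circ> Y \<circ> Y) \<circ> (Y ^^ n)"
    by (simp only: e1 e2 o_assoc)
  also have "\<dots> = (L ^^ n) \<circ> (Y ^^ Suc n)"
    by (simp only: LYY e3 o_assoc)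
  finally have step: "(L ^^ Suc n) \<circ> (Y ^^ Suc (Suc n)) = (L ^^ n) \<circ> (Y ^^ Suc n)" .
  show ?case by (rule trans[OF Suc.IH step[symmetric]])
qed

lemma drazin_inverse_unique:
  fixes L X Y :: "'a \<Rightarrow> 'a"
  assumes x1: "X \<circ> L \<circ> X = X" and x2: "L \<circ> X = X \<circ> L" and x3: "(L ^^ Suc k) \<circ> X = L ^^ k"
      and y1: "Y \<circ> L \<circ> Y = Y" and y2: "L \<circ> Y = Y \<circ> L" and y3: "(L ^^ Suc j) \<circ> Y = L ^^ j"
  shows "X = Y"
proof -
  have "Y = (Y ^^ Suc k) \<circ> (L ^^ k)" by (rule drazin_pow_left[OF y1 y2])
  also have "\<dots> = (Y ^^ Suc k) \<circ> ((L ^^ Suc k) \<circ> X)" by (simp only: x3)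
  also have "\<dots> = ((Y ^^ Suc k) \<circ> (L ^^ Suc k)) \<circ> X" by (simp only: o_assoc)
  also have "(Y ^^ Suc k) \<circ> (L ^^ Suc k) = ((Y ^^ Suc k) \<circ> (L ^^ k)) \<circ> L"
    by (simp only: funpow_Suc_right[of k L] o_assoc)
  also have "(Y ^^ Suc k) \<circ> (L ^^ k) = Y" using drazin_pow_left[OF y1 y2, of k] by (rule sym)
  finally have Y: "Y = Y \<circ> L \<circ> X" .
  have e1: "L ^^ j = Y \<circ> (L ^^ Suc j)" by (rule trans[OF y3[symmetric] funpow_comp_commute[OF y2]])
  have "X = (L ^^ j) \<circ> (X ^^ Suc j)" by (rule drazin_pow_right[OF x1 x2])
  also have "\<dots> = Y \<circ> (L ^^ Suc j) \<circ> (X ^^ Suc j)" by (simp only: e1)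
  also have "\<dots> = Y \<circ> L \<circ> ((L ^^ j) \<circ> (X ^^ Suc j))"
    by (simp only: funpow.simps(2) o_assoc)
  also have "(L ^^ j) \<circ> (X ^^ Suc j) = X" using drazin_pow_right[OF x1 x2, of j] by (rule sym)
  finally have "X = Y \<circ> L \<circ> X" .
  then show ?thesis using Y by (rule trans[OF _ sym])
qed

lemma drazin_eqI:
  assumes "superop_linear D" "D \<circ> L \<circ> D = D" "L \<circ> D = D \<circ> L" "(L ^^ Suc k) \<circ> D = L ^^ k"
  shows "drazin L = D"
  unfolding drazin_def
proof (rule the_equality)
  show "superop_linear D \<and> D \<circ> L \<circ> D = D \<and> L \<circ> D = D \<circ> L \<and> (\<exists>k. (L ^^ Suc k) \<circ> D = L ^^ k)"
    using assms by blast
  fix X assume "superop_linear X \<and> X \<circ> L \<circ> X = X \<and> L \<circ> X = X \<circ> L \<and> (\<exists>k. (L ^^ Suc k) \<circ> X = L ^^ k)"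
  then obtain j where "X \<circ> L \<circ> X = X" "L \<circ> X = X \<circ> L" "(L ^^ Suc j) \<circ> X = L ^^ j" by blast
  then show "X = D" by (rule drazin_inverse_unique[OF _ _ _ assms(2-4)])
qed

section \<open>Lindbladians with a decoherence-free subspace\<close>

definition Ksup_adj :: "'n::finite cmat \<Rightarrow> 'n cmat \<Rightarrow> 'n cmat" where
  "Ksup_adj K W = scal \<i> (adj K ** W - W ** K)"

lemma superop_linear_Ksup: "superop_linear (Ksup K)"
  by (simp add: superop_linear_def Ksup_def cmat_simps algebra_simps mult.commute)

lemma superop_linear_Ksup_adj: "superop_linear (Ksup_adj K)"
  by (simp add: superop_linear_def Ksup_adj_def cmat_simps algebra_simps mult.commute)

lemma trace_adj_mult_Ksup: "trace (adj W ** Ksup K Y) = trace (adj (Ksup_adj K W) ** (Y::'n::finite cmat))"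
proof -
  have "trace (adj W ** (Y ** adj K)) = trace (adj K ** (adj W ** Y))"
    by (subst trace_mul_sym) (simp add: matrix_mul_assoc)
  then show ?thesis
    by (simp add: Ksup_def Ksup_adj_def cmat_simps trace_simps algebra_simps)
qed

definition jump_sup :: "(nat \<Rightarrow> 'n::finite cmat) \<Rightarrow> nat \<Rightarrow> 'n cmat \<Rightarrow> 'n cmat" where
  "jump_sup F m X = (\<Sum>l<m. F l ** X ** adj (F l))"

lemma superop_linear_jump_sup: "superop_linear (jump_sup F m)"
  by (simp add: superop_linear_def jump_sup_def cmat_simps sum.distrib)

locale dfs_lindbladian =
  fixes P Q H :: "'n::finite cmat" and F :: "nat \<Rightarrow> 'n cmat" and m :: nat
  assumes PP: "P ** P = P" and adjP: "adj P = P"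
    and Q_eq: "Q = mat 1 - P"
    and adjH: "adj H = H"
    and H_block: "H = Q ** H ** Q"
    and F_block: "\<And>l. F l = P ** F l ** Q"
    and kernel_L: "\<And>\<rho>. lindblad H F m \<rho> = 0 \<longleftrightarrow> \<rho> = P ** \<rho> ** P"
begin

abbreviation "L \<equiv> lindblad H F m"
abbreviation "J \<equiv> jump_sup F m"

lemma PQ: "P ** Q = 0" by (simp add: Q_eq matrix_diff_ldistrib PP)
lemma QP: "Q ** P = 0" by (simp add: Q_eq matrix_diff_rdistrib PP)
lemma QQ: "Q ** Q = Q" by (simp add: Q_eq matrix_diff_rdistrib matrix_diff_ldistrib PP)
lemma adjQ: "adj Q = Q" by (simp add: Q_eq adj_diff adj_mat_1 adjP)
lemma P_plus_Q: "P + Q = mat 1" by (simp add: Q_eq)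

lemma FP: "F l ** P = 0" by (subst F_block) (simp add: matrix_mul_assoc[symmetric] QP matrix_mul_rzero)
lemma QF: "Q ** F l = 0" by (subst F_block) (simp add: QP matrix_mul_lzero matrix_mul_assoc)
lemma PF: "P ** F l = F l" by (metis F_block PP matrix_mul_assoc)
lemma FQ: "F l ** Q = F l" by (metis F_block QQ matrix_mul_assoc)
lemma PFa: "P ** adj (F l) = 0" by (metis FP adjP adj_matrix_mul adj_zero)
lemma FaQ: "adj (F l) ** Q = 0" by (metis QF adj_matrix_mul adjQ adj_zero)
lemma QFa: "Q ** adj (F l) = adj (F l)" by (metis FQ adj_matrix_mul adjQ)
lemma FaP: "adj (F l) ** P = adj (F l)" by (metis PF adj_matrix_mul adjP)
lemma PH: "P ** H = 0" by (subst H_block) (simp add: PQ matrix_mul_lzero matrix_mul_assoc)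
lemma HP: "H ** P = 0" by (subst H_block) (simp add: QP matrix_mul_rzero matrix_mul_assoc[symmetric])
lemma QH: "Q ** H = H" by (metis H_block QQ matrix_mul_assoc)
lemma HQ: "H ** Q = H" by (metis H_block QQ matrix_mul_assoc)

lemmas block_simps = PP PQ QP QQ FP QF PF FQ PFa FaQ QFa FaP PH HP QH HQ
  PP[THEN rassoc] PQ[THEN rassoc_zero] QP[THEN rassoc_zero] QQ[THEN rassoc]
  FP[THEN rassoc_zero] QF[THEN rassoc_zero] PF[THEN rassoc] FQ[THEN rassoc]
  PFa[THEN rassoc_zero] FaQ[THEN rassoc_zero] QFa[THEN rassoc] FaP[THEN rassoc]
  PH[THEN rassoc_zero] HP[THEN rassoc_zero] QH[THEN rassoc] HQ[THEN rassoc] adjP adjQ adjH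

lemma block_decomp: "X = P ** (X ** P) + P ** (X ** Q) + Q ** (X ** P) + Q ** (X ** Q)"
proof -
  have "X = (P + Q) ** X ** (P + Q)" by (simp add: P_plus_Q)
  then show ?thesis by (simp add: cmat_simps algebra_simps)
qed

lemma row_decomp: "X = P ** X + Q ** (X::'n cmat)"
proof -
  have "(P + Q) ** X = X" by (simp add: P_plus_Q)
  then show ?thesis by (simp add: matrix_add_rdistrib)
qed

definition "T = (\<Sum>l<m. adj (F l) ** F l)"
definition "K = Kam H F m"

lemma K_eq: "K = H - scal (\<i>/2) T" by (simp add: K_def Kam_def T_def)
lemma adjT: "adj T = T" by (simp add: T_def cmat_simps)
lemma adjK: "adj K = H + scal (\<i>/2) T"
  by (simp add: K_eq cmat_simps adjT adjH)

lemma TP: "T ** P = 0" by (simp add: T_def cmat_simps block_simps)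
lemma PT: "P ** T = 0" by (simp add: T_def cmat_simps block_simps)
lemma QT: "Q ** T = T" by (simp add: T_def cmat_simps block_simps)
lemma TQ: "T ** Q = T" by (simp add: T_def cmat_simps block_simps)
lemma KP: "K ** P = 0" by (simp add: K_eq cmat_simps block_simps TP)
lemma PK: "P ** K = 0" by (simp add: K_eq cmat_simps block_simps PT)
lemma QK: "Q ** K = K" by (simp add: K_eq cmat_simps block_simps QT)
lemma KQ: "K ** Q = K" by (simp add: K_eq cmat_simps block_simps TQ)
lemma KaP: "adj K ** P = 0" by (metis PK adj_matrix_mul adjP adj_zero)
lemma PKa: "P ** adj K = 0" by (metis KP adj_matrix_mul adjP adj_zero)
lemma QKa: "Q ** adj K = adj K" by (metis KQ adj_matrix_mul adjQ)
lemma KaQ: "adj K ** Q = adj K" by (metis QK adj_matrix_mul adjQ)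

lemmas K_block_simps = TP PT QT TQ KP PK QK KQ KaP PKa QKa KaQ
  TP[THEN rassoc_zero] PT[THEN rassoc_zero] QT[THEN rassoc] TQ[THEN rassoc]
  KP[THEN rassoc_zero] PK[THEN rassoc_zero] QK[THEN rassoc] KQ[THEN rassoc]
  KaP[THEN rassoc_zero] PKa[THEN rassoc_zero] QKa[THEN rassoc] KaQ[THEN rassoc]

lemma T_eq_K: "T = scal \<i> (K - adj K)"
proof -
  have "K - adj K = - scal \<i> T" by (simp only: adjK) (simp add: K_eq scal_def vec_eq_iff)
  then show ?thesis by (simp add: scal_def vec_eq_iff)
qed

lemma L_eq_Ksup_plus_J: "L X = Ksup K X + J X"
  by (simp add: lindblad_def diss_def comm_def acomm_def Ksup_def K_eq adjK jump_sup_def T_def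
      cmat_simps sum.distrib sum_subtractf sum_negf adjH)

lemma superop_linear_L: "superop_linear L"
  unfolding superop_linear_def L_eq_Ksup_plus_J
  by (simp add: superop_linear_add[OF superop_linear_Ksup] superop_linear_scal[OF superop_linear_Ksup]
      superop_linear_add[OF superop_linear_jump_sup] superop_linear_scal[OF superop_linear_jump_sup]
      scal_add_right algebra_simps)

lemma J_block: "P ** (J X ** P) = J X"
  by (simp add: jump_sup_def cmat_simps block_simps)

lemma J_compress: "J (Q ** (X ** Q)) = J X"
  by (simp add: jump_sup_def cmat_simps block_simps)

lemma L_P_block: "L (P ** (X ** P)) = 0"
  using kernel_L[of "P ** (X ** P)"] by (simp add: cmat_simps block_simps)

lemma L_J: "L (J X) = 0"
  using L_P_block[of "J X"] by (simp add: J_block)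

lemma trace_adj_mult_T_mult: "trace (adj Y ** (T ** Y)) = of_real (\<Sum>l<m. hs_norm_sq (F l ** Y))"
proof -
  have "trace (adj Y ** (T ** Y)) = (\<Sum>l<m. trace (adj (F l ** Y) ** (F l ** Y)))"
    by (simp add: T_def cmat_simps trace_simps)
  then show ?thesis by (simp add: trace_adj_mult_self)
qed

lemma trace_adj_mult_mult_T: "trace (adj Y ** (Y ** T)) = of_real (\<Sum>l<m. hs_norm_sq (F l ** adj Y))"
proof -
  have "trace (adj Y ** (Y ** T)) = (\<Sum>l<m. trace (adj Y ** (Y ** adj (F l) ** F l)))"
    by (simp add: T_def cmat_simps trace_simps)
  also have "\<dots> = (\<Sum>l<m. trace (adj (F l ** adj Y) ** (F l ** adj Y)))"
    by (intro sum.cong refl, subst trace_mul_sym) (simp add: cmat_simps)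
  finally show ?thesis by (simp add: trace_adj_mult_self)
qed

lemma Im_trace_adj_mult_comm_H: "Im (trace (adj Y ** (H ** Y - Y ** H))) = 0"
proof -
  have "cnj (trace (adj Y ** (H ** Y))) = trace (adj Y ** (H ** Y))"
    by (simp add: trace_adj[symmetric] cmat_simps adjH)
  moreover have "cnj (trace (adj Y ** (Y ** H))) = trace (adj Y ** (Y ** H))"
    by (simp add: trace_adj[symmetric] cmat_simps adjH) (subst trace_mul_sym, simp add: cmat_simps)
  ultimately show ?thesis
    by (simp add: cmat_simps trace_sub) (metis Reals_cnj_iff complex_is_Real_iff)
qed

lemma sum_hs_norm_sq_eq_0D:
  assumes "(\<Sum>l<m. hs_norm_sq (A l)) = 0" and "l < m"
  shows "A l = (0::'n cmat)"
  using assms by (subst (asm) sum_nonneg_eq_0_iff) (auto simp: hs_norm_sq_nonneg intro: hs_norm_sq_eq_0D)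

text \<open>Taking \<open>trace (adj Y ** _)\<close> of \<open>Ksup K Y = 0\<close>: the Hamiltonian part is real, while the
  anti-Hermitian part \<open>-T/2\<close> of \<open>K\<close> contributes \<open>i/2\<close> times a sum of squared norms
  of \<open>F l ** Y\<close> and \<open>F l ** adj Y\<close>.\<close>
lemma Ksup_eq_0_jumps_vanish:
  assumes "Ksup K Y = 0" and "l < m"
  shows "F l ** Y = 0" and "Y ** adj (F l) = 0"
proof -
  define s1 where "s1 = (\<Sum>l<m. hs_norm_sq (F l ** Y))"
  define s2 where "s2 = (\<Sum>l<m. hs_norm_sq (F l ** adj Y))"
  have "K ** Y - Y ** adj K = 0"
    using assms(1) by (simp add: Ksup_def scal_eq_0_iff)
  then have comm: "H ** Y - Y ** H = scal (\<i>/2) (T ** Y) + scal (\<i>/2) (Y ** T)"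
    by (simp add: K_eq adjK cmat_simps algebra_simps adjH adjT)
  have "trace (adj Y ** (H ** Y - Y ** H)) = (\<i>/2) * (of_real s1 + of_real s2)"
    unfolding comm s1_def s2_def
    by (simp add: cmat_simps trace_simps trace_adj_mult_T_mult trace_adj_mult_mult_T algebra_simps)
  then have "Im (trace (adj Y ** (H ** Y - Y ** H))) = (s1 + s2) / 2" by (simp only:) simp
  then have "s1 + s2 = 0" using Im_trace_adj_mult_comm_H[of Y] by simp
  moreover have "s1 \<ge> 0" "s2 \<ge> 0" unfolding s1_def s2_def by (simp_all add: sum_nonneg hs_norm_sq_nonneg)
  ultimately have "s1 = 0" "s2 = 0" by linarith+
  then have "F l ** Y = 0" "F l ** adj Y = 0"
    using sum_hs_norm_sq_eq_0D[of "\<lambda>l. F l ** Y", OF _ assms(2)]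
      sum_hs_norm_sq_eq_0D[of "\<lambda>l. F l ** adj Y", OF _ assms(2)]
    unfolding s1_def s2_def by simp_all
  then show "F l ** Y = 0" "Y ** adj (F l) = 0"
    by (metis adj_adj adj_matrix_mul adj_zero)+
qed

lemma Ksup_eq_0_imp_P_block:
  assumes "Ksup K Y = 0" shows "Y = P ** Y ** P"
proof -
  have FY: "l < m \<Longrightarrow> F l ** Y = 0" and YF: "l < m \<Longrightarrow> Y ** adj (F l) = 0" for l
    using Ksup_eq_0_jumps_vanish[OF assms] by blast+
  have TY: "T ** Y = 0" and YT: "Y ** T = 0"
    by (simp_all add: T_def cmat_simps FY YF FY[THEN rassoc_zero] YF[THEN rassoc_zero])
  have "K ** Y - Y ** adj K = 0" using assms by (simp add: Ksup_def scal_eq_0_iff)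
  then have "H ** Y - Y ** H = 0" using TY YT by (simp add: K_eq adjK cmat_simps adjH adjT)
  then have "L Y = 0"
    by (simp add: lindblad_def diss_def comm_def acomm_def cmat_simps scal_zero_right FY YF
        FY[THEN rassoc_zero] YF[THEN rassoc_zero])
  then show ?thesis using kernel_L by simp
qed

lemma Q_block_left: "Q ** (Y ** Q) = Y \<Longrightarrow> Q ** Y = Y"
  by (metis QQ matrix_mul_assoc)

lemma Q_block_right: "Q ** (Y ** Q) = Y \<Longrightarrow> Y ** Q = Y"
  by (metis QQ matrix_mul_assoc)

lemma Ksup_Q_block_inj: "Q ** (Y ** Q) = Y \<Longrightarrow> Ksup K Y = 0 \<Longrightarrow> Y = 0"
  using Ksup_eq_0_imp_P_block[of Y] by (metis PQ matrix_mul_assoc matrix_mul_lzero matrix_mul_rzero)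

lemma Ksup_compress: "Q ** (Ksup K Z ** Q) = Ksup K (Q ** (Z ** Q))"
  by (simp add: Ksup_def cmat_simps block_simps K_block_simps)

text \<open>If \<open>K ** Z = 0\<close> then \<open>Z ** adj Z\<close> lies in the kernel of \<open>Ksup K\<close>.\<close>
lemma K_Q_inj:
  fixes Z :: "'n cmat"
  assumes QZ: "Q ** Z = Z" and KZ: "K ** Z = 0" shows "Z = 0"
proof -
  have "Q ** (Z ** adj Z ** Q) = Z ** adj Z"
    using QZ by (metis adjQ adj_matrix_mul matrix_mul_assoc)
  moreover have "Ksup K (Z ** adj Z) = 0"
    using KZ by (simp add: Ksup_def cmat_simps rassoc_zero adj_matrix_mul[symmetric])
  ultimately have "Z ** adj Z = 0" by (simp add: Ksup_Q_block_inj matrix_mul_assoc)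
  then have "adj (adj Z) ** adj Z = 0" by (simp add: adj_adj)
  then show ?thesis by (metis trace_adj_mult_self_eq_0D trace_zero adj_adj adj_zero)
qed

lemma K_Q_block_inj: "Q ** (Y ** Q) = Y \<Longrightarrow> K ** Y = 0 \<Longrightarrow> Y = 0"
  using K_Q_inj Q_block_left by blast

lemma Kinv_ex1: "\<exists>!R. R = Q ** R ** Q \<and> R ** K = Q \<and> K ** R = Q"
proof -
  have "\<exists>!R. R = Q ** R ** Q \<and> K ** R = Q"
    by (rule ex1_block_preimage[OF QQ])
      (simp_all add: superop_linear_def cmat_simps block_simps K_block_simps K_Q_block_inj)
  then obtain R where R: "R = Q ** R ** Q" "K ** R = Q" by blast
  then have "Q ** R = R" by (metis QQ matrix_mul_assoc)
  then have "Q ** ((R ** K - Q) ** Q) = R ** K - Q" "K ** (R ** K - Q) = 0"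
    using R(2) by (simp_all add: cmat_simps block_simps K_block_simps rassoc)
  then have "R ** K = Q" using K_Q_block_inj by force
  with R have "R = Q ** R ** Q \<and> R ** K = Q \<and> K ** R = Q" by blast
  moreover have "R' = R" if "R' = Q ** R' ** Q" "R' ** K = Q" "K ** R' = Q" for R'
    using \<open>\<exists>!R. R = Q ** R ** Q \<and> K ** R = Q\<close> that R by blast
  ultimately show ?thesis by blast
qed

definition "R = Kinv Q K"

lemma R_Q_block: "Q ** (R ** Q) = R" and RK: "R ** K = Q" and KR: "K ** R = Q"
proof -
  have "R = Q ** R ** Q \<and> R ** K = Q \<and> K ** R = Q"
    unfolding R_def Kinv_def by (rule theI'[OF Kinv_ex1])
  then show "Q ** (R ** Q) = R" "R ** K = Q" "K ** R = Q" by (auto simp: matrix_mul_assoc)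
qed

lemma QR: "Q ** R = R" by (rule Q_block_left[OF R_Q_block])
lemma RQ: "R ** Q = R" by (rule Q_block_right[OF R_Q_block])
lemma PR: "P ** R = 0" by (metis QR PQ matrix_mul_assoc matrix_mul_lzero)
lemma RP: "R ** P = 0" by (metis RQ QP matrix_mul_assoc matrix_mul_rzero)
lemma QRa: "Q ** adj R = adj R" by (metis RQ adj_matrix_mul adjQ)
lemma RaQ: "adj R ** Q = adj R" by (metis QR adj_matrix_mul adjQ)
lemma PRa: "P ** adj R = 0" by (metis RP adj_matrix_mul adjP adj_zero)
lemma RaP: "adj R ** P = 0" by (metis PR adj_matrix_mul adjP adj_zero)
lemma KaRa: "adj K ** adj R = Q" by (metis RK adj_matrix_mul adjQ)
lemma RaKa: "adj R ** adj K = Q" by (metis KR adj_matrix_mul adjQ)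

lemmas R_block_simps = QR RQ PR RP QRa RaQ PRa RaP RK KR KaRa RaKa
  QR[THEN rassoc] RQ[THEN rassoc] PR[THEN rassoc_zero] RP[THEN rassoc_zero]
  QRa[THEN rassoc] RaQ[THEN rassoc] PRa[THEN rassoc_zero] RaP[THEN rassoc_zero]
  RK[THEN rassoc] KR[THEN rassoc] KaRa[THEN rassoc] RaKa[THEN rassoc]

abbreviation "C \<equiv> Ksupinv Q K"

lemma Ksupinv_ex1: "Q ** (X ** Q) = X \<Longrightarrow> \<exists>!Y. Y = Q ** Y ** Q \<and> Ksup K Y = X"
  by (rule ex1_block_preimage[OF QQ superop_linear_Ksup Ksup_compress Ksup_Q_block_inj])

lemma C_Q_block: "Q ** (X ** Q) = X \<Longrightarrow> Q ** (C X ** Q) = C X"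
  and Ksup_C: "Q ** (X ** Q) = X \<Longrightarrow> Ksup K (C X) = X"
  using theI'[OF Ksupinv_ex1] by (auto simp: Ksupinv_def matrix_mul_assoc)

lemma C_unique: "Q ** (X ** Q) = X \<Longrightarrow> Q ** (Y ** Q) = Y \<Longrightarrow> Ksup K Y = X \<Longrightarrow> C X = Y"
  unfolding Ksupinv_def by (rule the1_equality[OF Ksupinv_ex1]) (simp_all add: matrix_mul_assoc)

lemma Ksup_adj_compress: "Q ** (Ksup_adj K Z ** Q) = Ksup_adj K (Q ** (Z ** Q))"
  by (simp add: Ksup_adj_def cmat_simps block_simps K_block_simps)

lemma Ksup_adj_Q_block_inj:
  assumes W: "Q ** (W ** Q) = W" and KW: "Ksup_adj K W = 0" shows "W = 0"
proof -
  have "trace (adj W ** W) = trace (adj W ** Ksup K (C W))" using Ksup_C[OF W] by simp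
  also have "\<dots> = trace (adj (Ksup_adj K W) ** C W)" by (rule trace_adj_mult_Ksup)
  also have "\<dots> = 0" using KW by (simp add: adj_zero matrix_mul_lzero trace_zero)
  finally show ?thesis by (rule trace_adj_mult_self_eq_0D)
qed

definition "C_adj X = (THE Y. Y = Q ** Y ** Q \<and> Ksup_adj K Y = X)"

lemma Ksup_adj_inv_ex1: "Q ** (X ** Q) = X \<Longrightarrow> \<exists>!Y. Y = Q ** Y ** Q \<and> Ksup_adj K Y = X"
  by (rule ex1_block_preimage[OF QQ superop_linear_Ksup_adj Ksup_adj_compress Ksup_adj_Q_block_inj])

lemma C_adj_unique:
  "Q ** (X ** Q) = X \<Longrightarrow> Q ** (Y ** Q) = Y \<Longrightarrow> Ksup_adj K Y = X \<Longrightarrow> C_adj X = Y"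
  unfolding C_adj_def by (rule the1_equality[OF Ksup_adj_inv_ex1]) (simp_all add: matrix_mul_assoc)

lemma C_adj_Q_block: "Q ** (X ** Q) = X \<Longrightarrow> Q ** (C_adj X ** Q) = C_adj X"
  and Ksup_adj_C_adj: "Q ** (X ** Q) = X \<Longrightarrow> Ksup_adj K (C_adj X) = X"
  using theI'[OF Ksup_adj_inv_ex1] by (auto simp: C_adj_def matrix_mul_assoc)

lemma C_add:
  "Q ** (A ** Q) = A \<Longrightarrow> Q ** (B ** Q) = B \<Longrightarrow> C (A + B) = C A + C B"
  by (rule C_unique)
    (simp_all add: cmat_simps C_Q_block Ksup_C superop_linear_add[OF superop_linear_Ksup])

lemma C_scal: "Q ** (A ** Q) = A \<Longrightarrow> C (scal c A) = scal c (C A)"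
  by (rule C_unique)
    (simp_all add: cmat_simps C_Q_block Ksup_C superop_linear_scal[OF superop_linear_Ksup])

lemma C_sum:
  assumes "\<And>i. i \<in> I \<Longrightarrow> Q ** (A i ** Q) = A i"
  shows "C (\<Sum>i\<in>I. A i) = (\<Sum>i\<in>I. C (A i))"
  by (rule C_unique)
    (simp_all add: assms cmat_simps C_Q_block Ksup_C superop_linear_sum[OF superop_linear_Ksup])

lemma C_zero: "C 0 = 0"
  using C_scal[of 0 0] by (simp add: cmat_simps)

lemma C_compress_Q_block: "Q ** (C (Q ** (X ** Q)) ** Q) = C (Q ** (X ** Q))"
  by (rule C_Q_block) (simp add: cmat_simps block_simps)

lemma Ksup_C_compress: "Ksup K (C (Q ** (X ** Q))) = Q ** (X ** Q)"
  by (rule Ksup_C) (simp add: cmat_simps block_simps)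

lemma QC: "Q ** C (Q ** (X ** Q)) = C (Q ** (X ** Q))"
  by (rule Q_block_left[OF C_compress_Q_block])
lemma CQ: "C (Q ** (X ** Q)) ** Q = C (Q ** (X ** Q))"
  by (rule Q_block_right[OF C_compress_Q_block])
lemma PC: "P ** C (Q ** (X ** Q)) = 0"
  by (metis QC PQ matrix_mul_assoc matrix_mul_lzero)
lemma CP: "C (Q ** (X ** Q)) ** P = 0"
  by (metis CQ QP matrix_mul_assoc matrix_mul_rzero)

lemmas C_block_simps = QC CQ PC CP
  QC[THEN rassoc] CQ[THEN rassoc] PC[THEN rassoc_zero] CP[THEN rassoc_zero]

text \<open>An inverse of \<open>Ksup K\<close> away from the \<open>P\<close>-block: on the \<open>P\<close>-\<open>Q\<close> and \<open>Q\<close>-\<open>P\<close>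
  blocks, \<open>Ksup K\<close> is one-sided multiplication by \<open>adj K\<close> resp. \<open>K\<close>.\<close>
definition "Kpinv X = scal (-\<i>) (P ** X ** adj R) + scal \<i> (R ** X ** P) + C (Q ** X ** Q)"

lemma superop_linear_Kpinv: "superop_linear Kpinv"
  unfolding superop_linear_def Kpinv_def
  by (simp add: cmat_simps C_add[of "Q ** (A ** Q)" "Q ** (B ** Q)" for A B, simplified cmat_simps block_simps]
      C_scal[of "Q ** (A ** Q)" for A, simplified cmat_simps block_simps] algebra_simps mult.commute)

lemma Kpinv_compress: "Q ** (Kpinv X ** Q) = C (Q ** (X ** Q))"
  by (simp add: Kpinv_def cmat_simps block_simps R_block_simps C_block_simps)

lemma Kpinv_P_block: "Kpinv (P ** (X ** P)) = 0"
  by (simp add: Kpinv_def cmat_simps block_simps R_block_simps C_zero)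

lemma Kpinv_J: "Kpinv (J X) = 0"
  using Kpinv_P_block[of "J X"] by (simp add: J_block)

lemma Ksup_Kpinv: "Ksup K (Kpinv X) = X - P ** (X ** P)"
proof -
  have "Ksup K (Kpinv X) = P ** (X ** Q) + Q ** (X ** P) + Q ** (X ** Q)"
    by (simp add: Kpinv_def superop_linear_add[OF superop_linear_Ksup]
        superop_linear_scal[OF superop_linear_Ksup] cmat_simps Ksup_C_compress)
      (simp add: Ksup_def cmat_simps block_simps K_block_simps R_block_simps)
  then show ?thesis using block_decomp[of X] by (simp add: algebra_simps)
qed

lemma Kpinv_Ksup: "Kpinv (Ksup K Y) = Y - P ** (Y ** P)"
proof -
  have "C (Q ** (Ksup K Y ** Q)) = Q ** (Y ** Q)"
    by (rule C_unique) (simp_all add: Ksup_compress cmat_simps block_simps)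
  then have "Kpinv (Ksup K Y) = P ** (Y ** Q) + Q ** (Y ** P) + Q ** (Y ** Q)"
    by (simp add: Kpinv_def cmat_simps del: Ksup_def)
      (simp add: Ksup_def cmat_simps block_simps K_block_simps R_block_simps)
  then show ?thesis using block_decomp[of Y] by (simp add: algebra_simps)
qed

text \<open>\<open>J\<close> maps into the \<open>P\<close>-block, which is annihilated by \<open>L\<close> and \<open>Kpinv\<close>; this
  makes \<open>Kpinv + J \<circ> Kpinv \<circ> Kpinv\<close> the Drazin inverse of \<open>L = Ksup K + J\<close>.\<close>
definition "Ldrazin X = Kpinv X + J (Kpinv (Kpinv X))"

lemma superop_linear_Ldrazin: "superop_linear Ldrazin"
  unfolding superop_linear_def Ldrazin_def
  by (simp add: superop_linear_add[OF superop_linear_Kpinv] superop_linear_scal[OF superop_linear_Kpinv]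
      superop_linear_add[OF superop_linear_jump_sup] superop_linear_scal[OF superop_linear_jump_sup]
      scal_add_right)

lemma L_Ldrazin: "L (Ldrazin X) = X - P ** (X ** P) + J (Kpinv X)"
  by (simp add: Ldrazin_def superop_linear_add[OF superop_linear_L] L_J)
    (simp add: L_eq_Ksup_plus_J Ksup_Kpinv)

lemma Ldrazin_L: "Ldrazin (L X) = X - P ** (X ** P) + J (Kpinv X)"
proof -
  have "Kpinv (L X) = X - P ** (X ** P)"
    by (simp add: L_eq_Ksup_plus_J superop_linear_add[OF superop_linear_Kpinv] Kpinv_J Kpinv_Ksup)
  then show ?thesis
    by (simp add: Ldrazin_def superop_linear_diff[OF superop_linear_Kpinv] Kpinv_P_block)
qed

lemma drazin_L: "drazin L = Ldrazin"
proof (rule drazin_eqI[where k=1])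
  note L_lin = superop_linear_add[OF superop_linear_L] superop_linear_diff[OF superop_linear_L]
  note D_lin = superop_linear_add[OF superop_linear_Ldrazin] superop_linear_diff[OF superop_linear_Ldrazin]
  have D_P_block: "Ldrazin (P ** (X ** P)) = 0" and D_J: "Ldrazin (J X) = 0" for X
    by (simp_all add: Ldrazin_def Kpinv_P_block Kpinv_J superop_linear_0[OF superop_linear_Kpinv]
        superop_linear_0[OF superop_linear_jump_sup])
  show "superop_linear Ldrazin" by (rule superop_linear_Ldrazin)
  show "Ldrazin \<circ> L \<circ> Ldrazin = Ldrazin"
    by (rule ext) (simp add: L_Ldrazin D_lin D_P_block D_J)
  show "L \<circ> Ldrazin = Ldrazin \<circ> L"
    by (rule ext) (simp add: L_Ldrazin Ldrazin_L)
  show "(L ^^ Suc 1) \<circ> Ldrazin = L ^^ 1"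
    by (rule ext) (simp add: L_Ldrazin L_lin L_P_block L_J)
qed

lemma Pinf_L: "Pinf L X = P ** (X ** P) - J (C (Q ** (X ** Q)))"
proof -
  have "J (Kpinv X) = J (C (Q ** (X ** Q)))" by (metis J_compress Kpinv_compress)
  then show ?thesis by (simp add: Pinf_def drazin_L L_Ldrazin)
qed

lemma C_adj_sum:
  assumes "\<And>i. i \<in> I \<Longrightarrow> Q ** (A i ** Q) = A i"
  shows "C_adj (\<Sum>i\<in>I. A i) = (\<Sum>i\<in>I. C_adj (A i))"
  by (rule C_adj_unique)
    (simp_all add: assms cmat_simps C_adj_Q_block Ksup_adj_C_adj superop_linear_sum[OF superop_linear_Ksup_adj])

lemma C_adj_T: "C_adj T = - Q"
proof (rule C_adj_unique)
  show "Q ** (T ** Q) = T" by (simp add: K_block_simps)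
  show "Q ** (- Q ** Q) = - Q" by (simp add: cmat_simps block_simps)
  show "Ksup_adj K (- Q) = T"
    by (simp add: Ksup_adj_def T_eq_K cmat_simps K_block_simps)
qed

lemma trace_adj_mult_F_C_sandwich:
  assumes Qg: "Q ** g = g"
  shows "trace (adj A ** (F l ** C (g ** B ** adj g) ** adj (F l))) =
         trace (adj (adj g ** C_adj (adj (F l) ** A ** F l) ** g) ** B)"
proof -
  define M where "M = g ** B ** adj g"
  define Z where "Z = adj (F l) ** A ** F l"
  have "adj g ** Q = adj g" using Qg by (metis adjQ adj_matrix_mul)
  then have M: "Q ** (M ** Q) = M" unfolding M_def using Qg by (metis matrix_mul_assoc)
  have Z: "Q ** (Z ** Q) = Z" unfolding Z_def by (simp add: cmat_simps block_simps)
  have "trace (adj A ** (F l ** C M ** adj (F l))) = trace (adj Z ** C M)"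
    using trace_mul_sym[of "adj A ** F l ** C M" "adj (F l)"] by (simp add: Z_def cmat_simps)
  also have "\<dots> = trace (adj (Ksup_adj K (C_adj Z)) ** C M)" using Ksup_adj_C_adj[OF Z] by simp
  also have "\<dots> = trace (adj (C_adj Z) ** Ksup K (C M))" by (rule trace_adj_mult_Ksup[symmetric])
  also have "\<dots> = trace (adj (C_adj Z) ** M)" using Ksup_C[OF M] by simp
  also have "\<dots> = trace (adj (adj g ** C_adj Z ** g) ** B)"
    using trace_mul_sym[of "adj (C_adj Z) ** g ** B" "adj g"] by (simp add: M_def cmat_simps)
  finally show ?thesis by (simp add: M_def Z_def)
qed

text \<open>The dual of \<open>J\<close> maps the identity to \<open>T\<close>, and \<open>C_adj T = -Q\<close>.\<close>
lemma hs_adjoint_J_C_sandwich_one: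
  assumes Qg: "\<And>l. Q ** g l = g l"
  shows "hs_adjoint (\<lambda>\<sigma>. - (\<Sum>l<m. \<Sum>l'<m. F l' ** C (g l ** \<sigma> ** adj (g l)) ** adj (F l'))) (mat 1)
    = (\<Sum>l<m. adj (g l) ** g l)"
proof -
  define E' where
    "E' A = - (\<Sum>l<m. \<Sum>l'<m. adj (g l) ** C_adj (adj (F l') ** A ** F l') ** g l)" for A
  have "hs_adjoint (\<lambda>\<sigma>. - (\<Sum>l<m. \<Sum>l'<m. F l' ** C (g l ** \<sigma> ** adj (g l)) ** adj (F l'))) = E'"
  proof (rule hs_adjoint_eqI)
    fix A B
    have "trace (adj A ** - (\<Sum>l<m. \<Sum>l'<m. F l' ** C (g l ** B ** adj (g l)) ** adj (F l'))) =
      - (\<Sum>l<m. \<Sum>l'<m. trace (adj A ** (F l' ** C (g l ** B ** adj (g l)) ** adj (F l'))))"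
      by (simp add: cmat_simps trace_simps)
    also have "\<dots> = trace (adj (E' A) ** B)"
      unfolding E'_def trace_adj_mult_F_C_sandwich[OF Qg] by (simp add: cmat_simps trace_simps)
    finally show "trace (adj A ** - (\<Sum>l<m. \<Sum>l'<m. F l' ** C (g l ** B ** adj (g l)) ** adj (F l'))) =
      trace (adj (E' A) ** B)" .
  qed
  moreover have "E' (mat 1) = - (\<Sum>l<m. adj (g l) ** C_adj T ** g l)"
    unfolding E'_def T_def
    by (subst C_adj_sum) (simp_all add: cmat_simps block_simps)
  ultimately show ?thesis
    by (simp add: C_adj_T cmat_simps Qg Qg[THEN rassoc] sum_negf)
qed

lemma Ldrazin_off_diagonal:
  assumes "Q ** (Y ** Q) = 0"
  shows "Ldrazin Y = scal (-\<i>) (P ** Y ** adj R) + scal \<i> (R ** Y ** P)"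
proof -
  have "Q ** (Kpinv Y ** Q) = 0" using Kpinv_compress[of Y] assms by (simp add: C_zero)
  then have "Q ** (Kpinv (Kpinv Y) ** Q) = 0" using Kpinv_compress[of "Kpinv Y"] by (simp add: C_zero)
  then have "J (Kpinv (Kpinv Y)) = 0"
    using J_compress[of "Kpinv (Kpinv Y)"] by (simp add: superop_linear_0[OF superop_linear_jump_sup])
  then show ?thesis
    using assms by (simp add: Ldrazin_def Kpinv_def cmat_simps C_zero)
qed

lemma adj_R_T_R: "adj R ** T ** R = scal \<i> (adj R - R)"
  by (simp add: T_eq_K cmat_simps R_block_simps)

lemma mult_PQ_orth: "X ** Q = X \<Longrightarrow> P ** Y = Y \<Longrightarrow> X ** Y = (0::'n cmat)"
  by (metis QP matrix_mul_assoc matrix_mul_lzero matrix_mul_rzero)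

lemma mult_QP_orth: "X ** P = X \<Longrightarrow> Q ** Y = Y \<Longrightarrow> X ** Y = (0::'n cmat)"
  by (metis PQ matrix_mul_assoc matrix_mul_lzero matrix_mul_rzero)

end

section \<open>Second-order perturbation\<close>

locale dfs_perturbation = dfs_lindbladian P Q H F m
  for P Q H :: "'n::finite cmat" and F m +
  fixes V :: "'n cmat" and f :: "nat \<Rightarrow> 'n cmat" and \<rho> :: "'n cmat"
  assumes adjV: "adj V = V" and \<rho>_block: "\<rho> = P ** \<rho> ** P"
begin

abbreviation "L' \<equiv> lindblad (H + V) (\<lambda>l. F l + f l) m"

lemma P\<rho>: "P ** \<rho> = \<rho>" by (metis PP \<rho>_block matrix_mul_assoc)
lemma \<rho>P: "\<rho> ** P = \<rho>" by (metis PP \<rho>_block matrix_mul_assoc)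

lemmas \<rho>_zeros =
  mult_PQ_orth[OF QQ P\<rho>] mult_PQ_orth[OF RQ P\<rho>] mult_PQ_orth[OF RaQ P\<rho>] mult_PQ_orth[OF FQ P\<rho>]
  mult_PQ_orth[OF TQ P\<rho>] mult_PQ_orth[OF HQ P\<rho>] mult_PQ_orth[OF KQ P\<rho>] mult_PQ_orth[OF KaQ P\<rho>]
  mult_QP_orth[OF \<rho>P QQ] mult_QP_orth[OF \<rho>P QR] mult_QP_orth[OF \<rho>P QRa] mult_QP_orth[OF \<rho>P QFa]
  mult_QP_orth[OF \<rho>P QT] mult_QP_orth[OF \<rho>P QH] mult_QP_orth[OF \<rho>P QK] mult_QP_orth[OF \<rho>P QKa]

lemmas \<rho>_block_simps = P\<rho> \<rho>P P\<rho>[THEN rassoc] \<rho>P[THEN rassoc] \<rho>_zeros \<rho>_zeros[THEN rassoc_zero]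

lemma L_state: "L \<rho> = 0"
  using kernel_L \<rho>_block by blast

lemma Pinf_state: "Pinf L \<rho> = \<rho>"
  by (simp add: Pinf_L cmat_simps \<rho>_block_simps C_zero superop_linear_0[OF superop_linear_jump_sup])

definition "KE = Keff P V F f m"
definition "Wf = (\<Sum>l<m. adj (P ** f l ** P) ** F l)"

lemma KE_eq: "KE = P ** V ** Q + Q ** V ** P - scal (\<i>/2) (adj Wf + Wf)"
  unfolding KE_def Keff_def Let_def Wf_def Q_eq[symmetric]
  by (simp add: cmat_simps sum.distrib)

lemma PW: "P ** Wf = Wf" by (simp add: Wf_def cmat_simps block_simps)
lemma WQ: "Wf ** Q = Wf" by (simp add: Wf_def cmat_simps block_simps)
lemma QWa: "Q ** adj Wf = adj Wf" by (metis WQ adj_matrix_mul adjQ)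
lemma WaP: "adj Wf ** P = adj Wf" by (metis PW adj_matrix_mul adjP)

definition "second_order_rest =
  scal (\<i>/2) (KE ** R ** KE ** \<rho> + adj KE ** adj R ** adj KE ** \<rho>
              - \<rho> ** KE ** R ** KE - \<rho> ** adj KE ** adj R ** adj KE)
  - scal \<i> (P ** V ** Q ** R ** KE ** \<rho>)
  + scal \<i> (\<rho> ** adj KE ** adj R ** (Q ** V ** P))
  + scal (1/2) (\<rho> ** Wf ** R ** KE + adj KE ** adj R ** adj Wf ** \<rho>)
  - scal (1/2) (adj KE ** adj R ** T ** R ** KE ** \<rho> + \<rho> ** adj KE ** adj R ** T ** R ** KE)"

text \<open>Split \<open>KE = b + c\<close> and \<open>adj KE = a + d\<close> into their \<open>P\<close>-\<open>Q\<close> and \<open>Q\<close>-\<open>P\<close> blocks;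
  then all products in the rest vanish or cancel by block orthogonality and \<open>adj_R_T_R\<close>.\<close>
lemma second_order_rest_eq_0: "second_order_rest = 0"
proof -
  define a where "a = P ** V ** Q + scal (\<i>/2) Wf"
  define b where "b = P ** V ** Q - scal (\<i>/2) Wf"
  define c where "c = Q ** V ** P - scal (\<i>/2) (adj Wf)"
  define d where "d = Q ** V ** P + scal (\<i>/2) (adj Wf)"
  have PQ_blocks: "P ** a = a" "a ** Q = a" "P ** b = b" "b ** Q = b"
    by (simp_all add: a_def b_def cmat_simps block_simps PW WQ PW[THEN rassoc])
  have QP_blocks: "Q ** c = c" "c ** P = c" "Q ** d = d" "d ** P = d"
    by (simp_all add: c_def d_def cmat_simps block_simps QWa WaP QWa[THEN rassoc])
  have KE: "KE = b + c" by (simp add: KE_eq b_def c_def scal_def vec_eq_iff algebra_simps)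
  have adj_KE: "adj KE = a + d"
  proof -
    have "adj KE = P ** V ** Q + Q ** V ** P + scal (\<i>/2) (adj Wf + Wf)"
      by (simp add: KE_eq cmat_simps adjV block_simps)
    then show ?thesis by (simp add: a_def d_def scal_def vec_eq_iff algebra_simps)
  qed
  have V_blocks: "P ** V ** Q = scal (1/2) (a + b)" "Q ** V ** P = scal (1/2) (c + d)"
    by (simp_all add: a_def b_def c_def d_def scal_def vec_eq_iff)
  have Wf: "Wf = scal (-\<i>) (a - b)" and adj_Wf: "adj Wf = scal (-\<i>) (d - c)"
    by (simp_all add: a_def b_def c_def d_def scal_def vec_eq_iff algebra_simps)
  have RTR: "adj R ** (T ** (R ** X)) = scal \<i> (adj R ** X) - scal \<i> (R ** X)" for X
    using adj_R_T_R[THEN rassoc, of X] by (simp add: cmat_simps)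
  note orth = mult_PQ_orth[OF PQ_blocks(2)] mult_PQ_orth[OF PQ_blocks(4)]
    mult_QP_orth[OF QP_blocks(2)] mult_QP_orth[OF QP_blocks(4)] mult_QP_orth[OF \<rho>P]
  have zeros: "a ** a = 0" "a ** b = 0" "a ** \<rho> = 0" "b ** a = 0" "b ** b = 0" "b ** \<rho> = 0"
    "c ** c = 0" "c ** d = 0" "c ** R = 0" "c ** adj R = 0" "c ** T = 0"
    "d ** c = 0" "d ** d = 0" "d ** R = 0" "d ** adj R = 0" "d ** T = 0"
    "\<rho> ** c = 0" "\<rho> ** d = 0" "\<rho> ** R = 0" "\<rho> ** adj R = 0" "\<rho> ** T = 0"
    "R ** a = 0" "R ** b = 0" "R ** \<rho> = 0" "adj R ** a = 0" "adj R ** b = 0" "adj R ** \<rho> = 0"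
    "T ** a = 0" "T ** b = 0" "T ** \<rho> = 0"
    by (simp_all add: orth PQ_blocks QP_blocks P\<rho> QR QRa QT mult_PQ_orth[OF RQ] mult_PQ_orth[OF RaQ]
        mult_PQ_orth[OF TQ])
  show ?thesis
    unfolding second_order_rest_def
    apply (simp only: adj_KE adj_Wf)
    apply (simp only: KE V_blocks Wf)
    by (simp add: cmat_simps PQ_blocks QP_blocks P\<rho> \<rho>P R_block_simps TQ QT zeros zeros[THEN rassoc_zero]
        RTR)
qed

lemma O1_state_compress: "Q ** (O1 V F f m \<rho> ** Q) = 0"
  by (simp add: O1_def comm_def acomm_def cmat_simps block_simps \<rho>_block_simps)

lemma Ldrazin_O1_state: "Ldrazin (O1 V F f m \<rho>) = R ** KE ** \<rho> + \<rho> ** adj KE ** adj R"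
  unfolding Ldrazin_off_diagonal[OF O1_state_compress] KE_eq Wf_def
  by (simp add: O1_def comm_def acomm_def cmat_simps block_simps \<rho>_block_simps R_block_simps adjV
      sum_simps)

lemma C_O1_second_order:
  "C (Q ** (O1 V F f m (R ** KE ** \<rho> + \<rho> ** adj KE ** adj R) ** Q)) = R ** KE ** \<rho> ** adj KE ** adj R"
proof (rule C_unique)
  show "Q ** (Q ** (O1 V F f m (R ** KE ** \<rho> + \<rho> ** adj KE ** adj R) ** Q) ** Q) =
      Q ** (O1 V F f m (R ** KE ** \<rho> + \<rho> ** adj KE ** adj R) ** Q)"
    by (simp add: cmat_simps block_simps)
  show "Q ** (R ** KE ** \<rho> ** adj KE ** adj R ** Q) = R ** KE ** \<rho> ** adj KE ** adj R"
    by (simp add: cmat_simps R_block_simps)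
  show "Ksup K (R ** KE ** \<rho> ** adj KE ** adj R) =
      Q ** (O1 V F f m (R ** KE ** \<rho> + \<rho> ** adj KE ** adj R) ** Q)"
    unfolding KE_eq Wf_def
    by (simp add: Ksup_def O1_def comm_def acomm_def cmat_simps block_simps \<rho>_block_simps
        R_block_simps adjV sum_simps) (rule sum.swap)
qed

lemma Leff_state:
  "Leff H F V f m \<rho> =
     P ** (L' \<rho> ** P) - J (C (Q ** (L' \<rho> ** Q)))
     - (P ** (O1 V F f m (R ** KE ** \<rho> + \<rho> ** adj KE ** adj R) ** P)
        - J (R ** KE ** \<rho> ** adj KE ** adj R))"
  unfolding Leff_def Let_def Pinf_state
  unfolding drazin_L Ldrazin_O1_state Pinf_L C_O1_second_order L_state
  by simp

lemma J_C_perturbation_compress: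
  "J (C (Q ** (L' \<rho> ** Q))) =
     (\<Sum>l<m. \<Sum>l'<m. F l' ** C ((Q ** f l ** P) ** \<rho> ** adj (Q ** f l ** P)) ** adj (F l'))"
proof -
  have "Q ** (L' \<rho> ** Q) = (\<Sum>l<m. (Q ** f l ** P) ** \<rho> ** adj (Q ** f l ** P))"
    by (simp add: lindblad_def diss_def comm_def acomm_def cmat_simps block_simps \<rho>_block_simps sum_simps)
  moreover have "C (\<Sum>l<m. (Q ** f l ** P) ** \<rho> ** adj (Q ** f l ** P)) =
      (\<Sum>l<m. C ((Q ** f l ** P) ** \<rho> ** adj (Q ** f l ** P)))"
    by (rule C_sum) (simp add: cmat_simps block_simps)
  ultimately show ?thesis
    by (simp add: superop_linear_sum[OF superop_linear_jump_sup]) (simp add: jump_sup_def)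
qed

lemma Heff_eq:
  "scal (1/2) (P ** V ** P - KE ** R ** KE) + scal (1/2) (adj (P ** V ** P - KE ** R ** KE)) =
   P ** V ** P - scal (1/2) (KE ** R ** KE + adj KE ** adj R ** adj KE)"
proof -
  have "adj (P ** V ** P - KE ** R ** KE) = P ** V ** P - adj KE ** adj R ** adj KE"
    by (simp add: cmat_simps adjV block_simps)
  then show ?thesis by (simp only:) (simp add: scal_def vec_eq_iff algebra_simps)
qed

text \<open>After expansion into blocks, the difference of the two sides is \<open>-second_order_rest\<close>.\<close>
lemma P_block_second_order:
  "P ** (L' \<rho> ** P) - (P ** (O1 V F f m (R ** KE ** \<rho> + \<rho> ** adj KE ** adj R) ** P)
     - J (R ** KE ** \<rho> ** adj KE ** adj R))
   = scal (-\<i>) (comm (P ** V ** P - scal (1/2) (KE ** R ** KE + adj KE ** adj R ** adj KE)) \<rho>)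
     + (\<Sum>l<m. diss (P ** f l ** P - F l ** R ** KE) \<rho>)
     - scal (1/2) (acomm (\<Sum>l<m. adj (Q ** f l ** P) ** (Q ** f l ** P)) \<rho>)"
proof -
  have f_split: "adj (f l) ** (f l ** X) = adj (f l) ** (P ** (f l ** X)) + adj (f l) ** (Q ** (f l ** X))"
    for l and X :: "'n cmat"
    by (subst row_decomp[of "f l ** X"]) (simp only: matrix_add_ldistrib)
  have "P ** (L' \<rho> ** P) - (P ** (O1 V F f m (R ** KE ** \<rho> + \<rho> ** adj KE ** adj R) ** P)
     - J (R ** KE ** \<rho> ** adj KE ** adj R))
   - (scal (-\<i>) (comm (P ** V ** P - scal (1/2) (KE ** R ** KE + adj KE ** adj R ** adj KE)) \<rho>)
     + (\<Sum>l<m. diss (P ** f l ** P - F l ** R ** KE) \<rho>)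
     - scal (1/2) (acomm (\<Sum>l<m. adj (Q ** f l ** P) ** (Q ** f l ** P)) \<rho>)) = - second_order_rest"
    by (simp add: lindblad_def diss_def comm_def acomm_def O1_def jump_sup_def second_order_rest_def
        T_def Wf_def cmat_simps block_simps \<rho>_block_simps R_block_simps adjV sum_simps f_split)
  then show ?thesis using second_order_rest_eq_0 by simp
qed

theorem Leff_formula:
  "let K = Kam H F m;
       KE = Keff P V F f m;
       X = P ** V ** P - KE ** Kinv Q K ** KE;
       Heff = scal (1/2) X + scal (1/2) (adj X);
       Feff = (\<lambda>l. P ** f l ** P - F l ** Kinv Q K ** KE);
       Eeff = (\<lambda>\<sigma>. - (\<Sum>l<m. \<Sum>l'<m.
                  F l' ** Ksupinv Q K ((Q ** f l ** P) ** \<sigma> ** adj (Q ** f l ** P)) ** adj (F l')))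
   in Leff H F V f m \<rho> =
        scal (-\<i>) (comm Heff \<rho>) + (\<Sum>l<m. diss (Feff l) \<rho>)
        + Eeff \<rho> - scal (1/2) (acomm (hs_adjoint Eeff (mat 1)) \<rho>)"
proof -
  have "hs_adjoint (\<lambda>\<sigma>. - (\<Sum>l<m. \<Sum>l'<m.
      F l' ** C ((Q ** f l ** P) ** \<sigma> ** adj (Q ** f l ** P)) ** adj (F l'))) (mat 1)
    = (\<Sum>l<m. adj (Q ** f l ** P) ** (Q ** f l ** P))"
    by (rule hs_adjoint_J_C_sandwich_one) (simp add: QQ[THEN rassoc] matrix_mul_assoc[symmetric])
  then show ?thesis
    unfolding Let_def K_def[symmetric] R_def[symmetric] KE_def[symmetric] Heff_eq Leff_state
      J_C_perturbation_compress
    using P_block_second_order by (simp add: algebra_simps)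
qed

end

lemma lindblad_cong: "(\<And>l. l < m \<Longrightarrow> F' l = F l) \<Longrightarrow> lindblad H F' m = lindblad H F m"
  by (simp add: fun_eq_iff lindblad_def)

lemma Kam_cong: "(\<And>l. l < m \<Longrightarrow> F' l = F l) \<Longrightarrow> Kam H F' m = Kam H F m"
  by (simp add: Kam_def)

lemma Keff_cong: "(\<And>l. l < m \<Longrightarrow> F' l = F l) \<Longrightarrow> Keff P V F' f m = Keff P V F f m"
  by (simp add: Keff_def)

lemma Leff_cong:
  assumes "\<And>l. l < m \<Longrightarrow> F' l = F l"
  shows "Leff H F' V f m = Leff H F V f m"
proof -
  have "O1 V F' f m = O1 V F f m" by (simp add: fun_eq_iff O1_def assms)
  moreover have "lindblad (H + V) (\<lambda>l. F' l + f l) m = lindblad (H + V) (\<lambda>l. F l + f l) m"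
    by (rule lindblad_cong) (simp add: assms)
  ultimately show ?thesis by (simp add: fun_eq_iff Leff_def lindblad_cong[OF assms])
qed

theorem mainTheorem1:
  fixes P H V :: "complex^('n::finite)^'n" and F f :: "nat \<Rightarrow> complex^'n^'n" and m :: nat
  assumes hP: "orth_proj P"
    and hH: "hermitian H"
    and hV: "hermitian V"
    and hHQ: "H = (mat 1 - P) ** H ** (mat 1 - P)"
    and hFPQ: "\<And>l. l < m \<Longrightarrow> F l = P ** F l ** (mat 1 - P)"
    and hDFS: "\<And>\<rho>. lindblad H F m \<rho> = 0 \<longleftrightarrow> \<rho> = P ** \<rho> ** P"
    and h\<rho>: "\<rho> = P ** \<rho> ** P"
  shows
    "let Q = mat 1 - P;
         K = Kam H F m;
         KE = Keff P V F f m;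
         X = P ** V ** P - KE ** Kinv Q K ** KE;
         Heff = scal (1/2) X + scal (1/2) (adj X);
         Feff = (\<lambda>l. P ** f l ** P - F l ** Kinv Q K ** KE);
         Eeff = (\<lambda>\<sigma>. - (\<Sum>l<m. \<Sum>l'<m.
                    F l' ** Ksupinv Q K ((Q ** f l ** P) ** \<sigma> ** adj (Q ** f l ** P)) ** adj (F l')))
     in Leff H F V f m \<rho> =
          scal (-\<i>) (comm Heff \<rho>) + (\<Sum>l<m. diss (Feff l) \<rho>)
          + Eeff \<rho> - scal (1/2) (acomm (hs_adjoint Eeff (mat 1)) \<rho>)"
proof -
  text \<open>Only the jump operators with index below \<open>m\<close> matter, so replace the others by their
    \<open>P\<close>-\<open>Q\<close> blocks as well.\<close>
  define F' where "F' l = P ** F l ** (mat 1 - P)" for l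
  have F'_eq: "\<And>l. l < m \<Longrightarrow> F' l = F l" using hFPQ by (simp add: F'_def)
  have PP: "P ** P = P" using hP by (simp add: orth_proj_def)
  interpret dfs_perturbation P "mat 1 - P" H F' m V f \<rho>
  proof
    show "F' l = P ** F' l ** (mat 1 - P)" for l
      by (simp add: F'_def cmat_simps PP PP[THEN rassoc])
  qed (use hP hH hV hHQ hDFS h\<rho> in \<open>simp_all add: orth_proj_def hermitian_def lindblad_cong[OF F'_eq]\<close>)
  show ?thesis
    using Leff_formula unfolding Let_def
    by (simp only: Kam_cong[OF F'_eq] Keff_cong[OF F'_eq] Leff_cong[OF F'_eq]
        F'_eq[OF lessThan_iff[THEN iffD1]] cong: sum.cong)
qed

end
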